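(* Let $(S,+,\le)$ be a commutative partially ordered semigroup (addition monotone in each variable) in which every non-empty subset has an infimum and a supremum. Let $\mathcal X_0=\{0,\dots,\ell\}$ and $\mathcal X_1$ be totally ordered sets and $\mathcal X_2=\mathbb R$. Let $\Phi$ be a root system in a real vector space $V$, $\Psi=\Phi\cup\{0\}$, $\Phi^0\subseteq\dots\subseteq\Phi^\ell=\Phi$ closed subsystems, $\Psi^j=\Phi^j\cup\{0\}$, and $\lambda\in V^*$. For triply indexed vectors $\tau=(t_{vij})$, $\tau'=(t'_{vij})$ ($v\in\mathcal X_2$, $i\in\mathcal X_1$, $j\in\mathcal X_0$) define $f_\tau\colon\Psi\to S$ by $f_\tau(\alpha)=\sup\{t_{v_\alpha ij_\alpha}:i\in\mathcal X_1\}$, where $v_\alpha=\langle\alpha,\lambda\rangle$ and $j_\alpha$ is the least $j$ with $\alpha\in\Psi^j$. Then: (1) if $\tau$ is concave, $f_\tau$ is concave, i.e. $f_\tau(\sum_i a_i)\le\sum_i f_\tau(a_i)$ for every non-empty finite family $(a_i)$ in $\Psi$ with $\sum_ia_i\in\Psi$; (2) $f_{\tau\vee\tau'}\le f_\tau\bowtie f_{\tau'}$; (3) if $\tau$ is concave, $f_{\tau\vee\tau'}\le f_\tau\rtimes f_{\tau'}$; (4) if $\tau$ and $\tau'$ are concave, $f_{\tau\vee\tau'}\le f_\tau\curlyvee f_{\tau'}$.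
   Context: Operations on indexed vectors (all infima componentwise). Singly indexed vectors $\vec a\in S^{\mathcal X_0}$: $(\vec a\vee_1\vec b)_j=\inf\{a_{j_1}+b_{j_2}: j\le j_1=j_2,\text{ or } j_2\le j=j_1,\text{ or } j_1\le j_2=j\}$. Doubly indexed vectors $A=(\vec a_i)_{i\in\mathcal X_1}$: $(A\vee_2B)_i=\inf\{\vec a_{i_1}\vee_1\vec b_{i_2}: i\ge i_1=i_2,\text{ or } i_2\ge i=i_1,\text{ or } i_1\ge i_2=i\}$ (note the reversed order on $\mathcal X_1$). Triply indexed vectors $\rho=(A_v)_{v\in\mathbb R}$, $\sigma=(B_v)$: $(\rho\vee\sigma)_v=\inf\{A_{v_1}\vee_2B_{v_2}:v_1+v_2=v\}$. $\tau$ is concave if $\tau\le\tau\vee\tau$ componentwise. For functions $f,f'\colon\Psi\to S$ and $\alpha\in\Psi$ (sums ranging over elements of $\Psi$, families non-empty): $(f\bowtie f')(\alpha)=\inf_{a+a'=\alpha}f(a)+f'(a')$; $(f\rtimes f')(\alpha)=\inf_{\sum_ia_i+a'=\alpha}\sum_if(a_i)+f'(a')$; $(f\curlyvee f')(\alpha)=\inf_{\sum_ia_i+\sum_ja'_j=\alpha}\sum_if(a_i)+\sum_jf'(a'_j)$. Inequalities between functions are pointwise. *)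

theory Defs
  imports "HOL-Analysis.Analysis"
begin

section \<open>Root systems (Bourbaki, not necessarily reduced)\<close>

definition root_system :: "'v::real_vector set \<Rightarrow> bool" where
  "root_system \<Phi> \<longleftrightarrow> finite \<Phi> \<and> 0 \<notin> \<Phi> \<and> span \<Phi> = UNIV \<and>
     (\<forall>\<alpha>\<in>\<Phi>. \<exists>c :: 'v \<Rightarrow> real. linear c \<and> c \<alpha> = 2 \<and>
        (\<forall>\<beta>\<in>\<Phi>. \<beta> - c \<beta> *\<^sub>R \<alpha> \<in> \<Phi>) \<and> (\<forall>\<beta>\<in>\<Phi>. c \<beta> \<in> \<int>))"

definition closed_subsystem :: "'v::real_vector set \<Rightarrow> 'v set \<Rightarrow> bool" where
  "closed_subsystem \<Phi> \<Phi>' \<longleftrightarrow> \<Phi>' \<subseteq> \<Phi> \<and> (\<forall>\<alpha>\<in>\<Phi>'. - \<alpha> \<in> \<Phi>') \<and>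
     (\<forall>\<alpha>\<in>\<Phi>'. \<forall>\<beta>\<in>\<Phi>'. \<alpha> + \<beta> \<in> \<Phi> \<longrightarrow> \<alpha> + \<beta> \<in> \<Phi>')"

fun nesum :: "'a::ab_semigroup_add list \<Rightarrow> 'a" where
  "nesum [x] = x"
| "nesum (x # y # xs) = x + nesum (y # xs)"

text \<open>Singly indexed vectors: indices X0 = {0..l}, encoded as nat.\<close>
definition vee1 :: "nat \<Rightarrow> (nat \<Rightarrow> 's::{complete_lattice,ab_semigroup_add}) \<Rightarrow> (nat \<Rightarrow> 's) \<Rightarrow> nat \<Rightarrow> 's" where
  "vee1 l a b j = Inf {a j1 + b j2 | j1 j2. j1 \<le> l \<and> j2 \<le> l \<and>
      ((j \<le> j1 \<and> j1 = j2) \<or> (j2 \<le> j \<and> j = j1) \<or> (j1 \<le> j2 \<and> j2 = j))}"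

text \<open>Doubly indexed vectors (reversed order on the second index set).\<close>
definition vee2 :: "nat \<Rightarrow> ('i::linorder \<Rightarrow> nat \<Rightarrow> 's::{complete_lattice,ab_semigroup_add})
     \<Rightarrow> ('i \<Rightarrow> nat \<Rightarrow> 's) \<Rightarrow> 'i \<Rightarrow> nat \<Rightarrow> 's" where
  "vee2 l A B i = Inf {vee1 l (A i1) (B i2) | i1 i2.
      (i \<ge> i1 \<and> i1 = i2) \<or> (i2 \<ge> i \<and> i = i1) \<or> (i1 \<ge> i2 \<and> i2 = i)}"

definition vee3 :: "nat \<Rightarrow> (real \<Rightarrow> 'i::linorder \<Rightarrow> nat \<Rightarrow> 's::{complete_lattice,ab_semigroup_add})
     \<Rightarrow> (real \<Rightarrow> 'i \<Rightarrow> nat \<Rightarrow> 's) \<Rightarrow> real \<Rightarrow> 'i \<Rightarrow> nat \<Rightarrow> 's" where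
  "vee3 l \<rho> \<sigma> v = Inf {vee2 l (\<rho> v1) (\<sigma> v2) | v1 v2. v1 + v2 = v}"

definition concave3 :: "nat \<Rightarrow> (real \<Rightarrow> 'i::linorder \<Rightarrow> nat \<Rightarrow> 's::{complete_lattice,ab_semigroup_add}) \<Rightarrow> bool" where
  "concave3 l \<tau> \<longleftrightarrow> (\<forall>v i j. j \<le> l \<longrightarrow> \<tau> v i j \<le> vee3 l \<tau> \<tau> v i j)"

definition f_tau :: "nat \<Rightarrow> (nat \<Rightarrow> 'v::real_vector set) \<Rightarrow> ('v \<Rightarrow> real)
     \<Rightarrow> (real \<Rightarrow> 'i \<Rightarrow> nat \<Rightarrow> 's::complete_lattice) \<Rightarrow> 'v \<Rightarrow> 's" where
  "f_tau l Phis lam \<tau> \<alpha> = (SUP i. \<tau> (lam \<alpha>) i (LEAST j. \<alpha> \<in> Phis j \<union> {0}))"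

definition concave_fun :: "'v::real_vector set \<Rightarrow> ('v \<Rightarrow> 's::{order,ab_semigroup_add}) \<Rightarrow> bool" where
  "concave_fun \<Psi> f \<longleftrightarrow> (\<forall>as. as \<noteq> [] \<longrightarrow> set as \<subseteq> \<Psi> \<longrightarrow> sum_list as \<in> \<Psi> \<longrightarrow>
      f (sum_list as) \<le> nesum (map f as))"

definition bowtie :: "'v::real_vector set \<Rightarrow> ('v \<Rightarrow> 's::{complete_lattice,ab_semigroup_add})
     \<Rightarrow> ('v \<Rightarrow> 's) \<Rightarrow> 'v \<Rightarrow> 's" where
  "bowtie \<Psi> f f' \<alpha> = Inf {f a + f' a' | a a'. a \<in> \<Psi> \<and> a' \<in> \<Psi> \<and> a + a' = \<alpha>}"

definition rtimes :: "'v::real_vector set \<Rightarrow> ('v \<Rightarrow> 's::{complete_lattice,ab_semigroup_add})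
     \<Rightarrow> ('v \<Rightarrow> 's) \<Rightarrow> 'v \<Rightarrow> 's" where
  "rtimes \<Psi> f f' \<alpha> = Inf {nesum (map f as) + f' a' | as a'.
      as \<noteq> [] \<and> set as \<subseteq> \<Psi> \<and> a' \<in> \<Psi> \<and> sum_list as + a' = \<alpha>}"

definition curlyvee :: "'v::real_vector set \<Rightarrow> ('v \<Rightarrow> 's::{complete_lattice,ab_semigroup_add})
     \<Rightarrow> ('v \<Rightarrow> 's) \<Rightarrow> 'v \<Rightarrow> 's" where
  "curlyvee \<Psi> f f' \<alpha> = Inf {nesum (map f as) + nesum (map f' bs) | as bs.
      as \<noteq> [] \<and> bs \<noteq> [] \<and> set as \<subseteq> \<Psi> \<and> set bs \<subseteq> \<Psi> \<and> sum_list as + sum_list bs = \<alpha>}"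

end

theory Submission
  imports Defs
begin

text \<open>The level of a root is the least \<open>j\<close> with the root in \<open>\<Psi>\<^sup>j\<close>. If a root is a sum of
  elements of \<open>\<Psi>\<close> whose maximal level \<open>M\<close> is attained only once, then the sum has level \<open>M\<close>:
  the unique summand of level \<open>M\<close> is the sum minus summands of lower level, and closed subsystems
  of a root system are closed under all sums that are roots (a consequence of the classical fact
  that \<open>\<alpha> - \<beta> \<in> \<Psi>\<close> for roots with positive invariant inner product). This level behaviour is
  exactly the index condition in \<open>\<or>\<^sub>1\<close>, so splitting a family of summands one step at a time and
  applying \<open>\<tau> \<le> \<tau> \<or> \<tau>\<close> (with \<open>\<langle>\<cdot>,\<lambda>\<rangle>\<close> additive) bounds each component of
  \<open>\<tau> \<or> \<tau>'\<close> at \<open>(\<langle>\<alpha>,\<lambda>\<rangle>, i, j\<^sub>\<alpha>)\<close>; taking the supremum over \<open>i\<close> gives all four inequalities.\<close>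

section \<open>Root systems and their invariant form\<close>

definition coroot :: "'v::real_vector set \<Rightarrow> 'v \<Rightarrow> 'v \<Rightarrow> real" where
  "coroot \<Phi> \<alpha> = (SOME c. linear c \<and> c \<alpha> = 2 \<and> (\<forall>\<beta>\<in>\<Phi>. \<beta> - c \<beta> *\<^sub>R \<alpha> \<in> \<Phi>) \<and> (\<forall>\<beta>\<in>\<Phi>. c \<beta> \<in> \<int>))"

definition reflection :: "'v::real_vector set \<Rightarrow> 'v \<Rightarrow> 'v \<Rightarrow> 'v" where
  "reflection \<Phi> \<alpha> x = x - coroot \<Phi> \<alpha> x *\<^sub>R \<alpha>"

text \<open>Summing the squares of all coroots gives a Weyl-invariant positive semidefinite form, which
  plays the role of the invariant inner product of the classical theory.\<close>
definition root_form :: "'v::real_vector set \<Rightarrow> 'v \<Rightarrow> 'v \<Rightarrow> real" where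
  "root_form \<Phi> x y = (\<Sum>\<gamma>\<in>\<Phi>. coroot \<Phi> \<gamma> x * coroot \<Phi> \<gamma> y)"

lemma Ints_pos_mult_le_4:
  fixes a b :: real
  assumes "a \<in> \<int>" "b \<in> \<int>" "0 < a" "0 < b" "a * b \<le> 4"
  shows "a = 1 \<or> b = 1 \<or> (a = 2 \<and> b = 2)"
proof -
  obtain m n where mn: "a = of_int m" "b = of_int n"
    using assms(1,2) Ints_cases by metis
  then have "0 < m" "0 < n" "m * n \<le> 4"
    using assms(3-5) by (simp_all flip: of_int_mult)
  moreover have "2 * m \<le> m * n" "2 * n \<le> m * n" if "2 \<le> m" "2 \<le> n"
    using that by (simp_all add: mult_right_mono mult_left_mono)
  ultimately have "m = 1 \<or> n = 1 \<or> (m = 2 \<and> n = 2)"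
    by linarith
  then show ?thesis
    using mn by auto
qed

lemma linear_sum_list: "linear f \<Longrightarrow> f (sum_list xs) = sum_list (map f xs)"
  by (induction xs) (simp_all add: linear_add linear_0)

context
  fixes \<Phi> :: "'v::real_vector set"
  assumes rs: "root_system \<Phi>"
begin

lemma finite_roots: "finite \<Phi>" and zero_notin_roots: "0 \<notin> \<Phi>" and span_roots: "span \<Phi> = UNIV"
  using rs unfolding root_system_def by auto

lemma coroot_spec:
  assumes "\<alpha> \<in> \<Phi>"
  shows "linear (coroot \<Phi> \<alpha>) \<and> coroot \<Phi> \<alpha> \<alpha> = 2 \<and> (\<forall>\<beta>\<in>\<Phi>. reflection \<Phi> \<alpha> \<beta> \<in> \<Phi>)
    \<and> (\<forall>\<beta>\<in>\<Phi>. coroot \<Phi> \<alpha> \<beta> \<in> \<int>)"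
proof -
  have "\<exists>c. linear c \<and> c \<alpha> = 2 \<and> (\<forall>\<beta>\<in>\<Phi>. \<beta> - c \<beta> *\<^sub>R \<alpha> \<in> \<Phi>) \<and> (\<forall>\<beta>\<in>\<Phi>. c \<beta> \<in> \<int>)"
    using rs assms by (auto simp: root_system_def)
  from someI_ex[OF this] show ?thesis
    by (simp add: coroot_def reflection_def)
qed

lemma linear_coroot: "\<alpha> \<in> \<Phi> \<Longrightarrow> linear (coroot \<Phi> \<alpha>)"
  and coroot_self: "\<alpha> \<in> \<Phi> \<Longrightarrow> coroot \<Phi> \<alpha> \<alpha> = 2"
  and reflection_in_roots: "\<alpha> \<in> \<Phi> \<Longrightarrow> \<beta> \<in> \<Phi> \<Longrightarrow> reflection \<Phi> \<alpha> \<beta> \<in> \<Phi>"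
  and coroot_in_Ints: "\<alpha> \<in> \<Phi> \<Longrightarrow> \<beta> \<in> \<Phi> \<Longrightarrow> coroot \<Phi> \<alpha> \<beta> \<in> \<int>"
  using coroot_spec by blast+

lemma progression_in_roots_step_eq_0:
  assumes "\<And>k::nat. \<beta> + real k *\<^sub>R d \<in> \<Phi>"
  shows "d = 0"
proof (rule ccontr)
  assume "d \<noteq> 0"
  then have "inj (\<lambda>k::nat. \<beta> + real k *\<^sub>R d)"
    by (auto simp: inj_def)
  with assms finite_roots show False
    by (metis finite_imageD finite_subset image_subsetI infinite_UNIV_nat)
qed

lemma coroot_unique:
  assumes a: "\<alpha> \<in> \<Phi>" and c: "linear c" "c \<alpha> = 2" "\<And>\<beta>. \<beta> \<in> \<Phi> \<Longrightarrow> \<beta> - c \<beta> *\<^sub>R \<alpha> \<in> \<Phi>"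
  shows "c = coroot \<Phi> \<alpha>"
proof -
  let ?c' = "coroot \<Phi> \<alpha>"
  note lin' = linear_coroot[OF a]
  have shift: "x + (?c' x - c x) *\<^sub>R \<alpha> \<in> \<Phi>" if "x \<in> \<Phi>" for x
  proof -
    have "reflection \<Phi> \<alpha> x - c (reflection \<Phi> \<alpha> x) *\<^sub>R \<alpha> \<in> \<Phi>"
      using c(3) reflection_in_roots[OF a that] by blast
    also have "reflection \<Phi> \<alpha> x - c (reflection \<Phi> \<alpha> x) *\<^sub>R \<alpha> = x + (?c' x - c x) *\<^sub>R \<alpha>"
      using c(1,2) by (simp add: reflection_def linear_diff linear_scale algebra_simps flip: scaleR_2)
    finally show ?thesis .
  qed
  have "c \<beta> = ?c' \<beta>" if b: "\<beta> \<in> \<Phi>" for \<beta>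
  proof -
    define e where "e = ?c' \<beta> - c \<beta>"
    \<comment> \<open>Each shift moves by the same multiple of \<open>\<alpha>\<close>, since \<open>c\<close> and \<open>c'\<close> agree on \<open>\<alpha>\<close>.\<close>
    have "\<beta> + real k *\<^sub>R (e *\<^sub>R \<alpha>) \<in> \<Phi>" for k
    proof (induction k)
      case (Suc k)
      let ?y = "\<beta> + real k *\<^sub>R (e *\<^sub>R \<alpha>)"
      have "?c' ?y - c ?y = e"
        using c(2) coroot_self[OF a]
        by (simp add: e_def linear_add[OF lin'] linear_scale[OF lin'] linear_add[OF c(1)] linear_scale[OF c(1)])
      then show ?case
        using shift[OF Suc] by (simp add: algebra_simps)
    qed (use b in simp)
    then have "e *\<^sub>R \<alpha> = 0"
      by (rule progression_in_roots_step_eq_0)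
    with a zero_notin_roots show ?thesis
      by (auto simp: e_def)
  qed
  then show ?thesis
    using linear_eq_on_span[OF c(1) lin'] span_roots by blast
qed

lemma linear_reflection: "\<alpha> \<in> \<Phi> \<Longrightarrow> linear (reflection \<Phi> \<alpha>)"
  unfolding reflection_def
  by (rule linearI) (simp_all add: linear_add[OF linear_coroot] linear_scale[OF linear_coroot] algebra_simps)

lemma reflection_self: "\<alpha> \<in> \<Phi> \<Longrightarrow> reflection \<Phi> \<alpha> \<alpha> = - \<alpha>"
  using coroot_self by (simp add: reflection_def algebra_simps flip: scaleR_2)

lemma uminus_root: "\<alpha> \<in> \<Phi> \<Longrightarrow> - \<alpha> \<in> \<Phi>"
  using reflection_in_roots reflection_self by metis

lemma reflection_reflection: "\<alpha> \<in> \<Phi> \<Longrightarrow> reflection \<Phi> \<alpha> (reflection \<Phi> \<alpha> x) = x"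
  using coroot_self[of \<alpha>]
  by (simp add: reflection_def linear_diff[OF linear_coroot] linear_scale[OF linear_coroot])

lemma bij_betw_reflection: "\<alpha> \<in> \<Phi> \<Longrightarrow> bij_betw (reflection \<Phi> \<alpha>) \<Phi> \<Phi>"
  by (rule bij_betw_byWitness[where f'="reflection \<Phi> \<alpha>"])
    (auto simp: reflection_reflection reflection_in_roots)

lemma coroot_reflection:
  assumes a: "\<alpha> \<in> \<Phi>" and g: "\<gamma> \<in> \<Phi>"
  shows "coroot \<Phi> (reflection \<Phi> \<alpha> \<gamma>) = coroot \<Phi> \<gamma> \<circ> reflection \<Phi> \<alpha>"
proof (rule coroot_unique[OF reflection_in_roots[OF a g], symmetric])
  note lin = linear_reflection[OF a]
  show "linear (coroot \<Phi> \<gamma> \<circ> reflection \<Phi> \<alpha>)"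
    using linear_compose[OF lin linear_coroot[OF g]] .
  show "(coroot \<Phi> \<gamma> \<circ> reflection \<Phi> \<alpha>) (reflection \<Phi> \<alpha> \<gamma>) = 2"
    using reflection_reflection[OF a] coroot_self[OF g] by simp
  fix \<beta> assume b: "\<beta> \<in> \<Phi>"
  have "\<beta> - (coroot \<Phi> \<gamma> \<circ> reflection \<Phi> \<alpha>) \<beta> *\<^sub>R reflection \<Phi> \<alpha> \<gamma>
      = reflection \<Phi> \<alpha> (reflection \<Phi> \<gamma> (reflection \<Phi> \<alpha> \<beta>))"
    unfolding reflection_def[of _ \<gamma>]
    by (simp add: linear_diff[OF lin] linear_scale[OF lin] reflection_reflection[OF a])
  also have "\<dots> \<in> \<Phi>"
    using reflection_in_roots a g b by simp
  finally show "\<beta> - (coroot \<Phi> \<gamma> \<circ> reflection \<Phi> \<alpha>) \<beta> *\<^sub>R reflection \<Phi> \<alpha> \<gamma> \<in> \<Phi>" .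
qed

lemma root_form_reflection:
  assumes a: "\<alpha> \<in> \<Phi>"
  shows "root_form \<Phi> (reflection \<Phi> \<alpha> x) (reflection \<Phi> \<alpha> y) = root_form \<Phi> x y"
proof -
  have "root_form \<Phi> (reflection \<Phi> \<alpha> x) (reflection \<Phi> \<alpha> y)
      = (\<Sum>\<gamma>\<in>\<Phi>. coroot \<Phi> (reflection \<Phi> \<alpha> \<gamma>) x * coroot \<Phi> (reflection \<Phi> \<alpha> \<gamma>) y)"
    unfolding root_form_def by (rule sum.cong) (auto simp: coroot_reflection[OF a])
  also have "\<dots> = root_form \<Phi> x y"
    unfolding root_form_def
    by (rule sum.reindex_bij_betw[OF bij_betw_reflection[OF a]])
  finally show ?thesis .
qed

lemma root_form_commute: "root_form \<Phi> x y = root_form \<Phi> y x"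
  unfolding root_form_def by (simp add: mult.commute)

lemma linear_root_form: "linear (root_form \<Phi> x)"
proof (rule linearI)
  fix y z :: 'v and r :: real
  show "root_form \<Phi> x (y + z) = root_form \<Phi> x y + root_form \<Phi> x z"
    unfolding root_form_def
    by (simp add: sum.distrib[symmetric] distrib_left linear_add[OF linear_coroot] cong: sum.cong)
  show "root_form \<Phi> x (r *\<^sub>R y) = r *\<^sub>R root_form \<Phi> x y"
    unfolding root_form_def
    by (simp add: sum_distrib_left linear_scale[OF linear_coroot] algebra_simps cong: sum.cong)
qed

lemma root_form_root_ge_4: "\<beta> \<in> \<Phi> \<Longrightarrow> 4 \<le> root_form \<Phi> \<beta> \<beta>"
  using member_le_sum[of \<beta> \<Phi> "\<lambda>\<gamma>. coroot \<Phi> \<gamma> \<beta> * coroot \<Phi> \<gamma> \<beta>"] finite_roots coroot_self[of \<beta>]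
  by (simp add: root_form_def)

lemma root_form_Cauchy_Schwarz: "(root_form \<Phi> x y)\<^sup>2 \<le> root_form \<Phi> x x * root_form \<Phi> y y"
  using Cauchy_Schwarz_ineq_sum[of "\<lambda>\<gamma>. coroot \<Phi> \<gamma> x" "\<lambda>\<gamma>. coroot \<Phi> \<gamma> y" \<Phi>]
  by (simp add: root_form_def power2_eq_square)

lemma coroot_root_form:
  assumes b: "\<beta> \<in> \<Phi>"
  shows "coroot \<Phi> \<beta> x * root_form \<Phi> \<beta> \<beta> = 2 * root_form \<Phi> x \<beta>"
proof -
  note lin = linear_root_form
  have "root_form \<Phi> x \<beta> = root_form \<Phi> (reflection \<Phi> \<beta> x) (reflection \<Phi> \<beta> \<beta>)"
    using root_form_reflection[OF b] by simp
  also have "\<dots> = - root_form \<Phi> \<beta> (reflection \<Phi> \<beta> x)"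
    by (simp add: reflection_self[OF b] linear_neg[OF lin] root_form_commute[of "reflection \<Phi> \<beta> x" \<beta>])
  also have "\<dots> = coroot \<Phi> \<beta> x * root_form \<Phi> \<beta> \<beta> - root_form \<Phi> x \<beta>"
    by (simp add: reflection_def linear_diff[OF lin] linear_scale[OF lin] root_form_commute[of \<beta> x])
  finally show ?thesis
    by simp
qed

lemma Cartan_integers_pos_of_root_form_pos:
  assumes a: "\<alpha> \<in> \<Phi>" and b: "\<beta> \<in> \<Phi>" and pos: "0 < root_form \<Phi> \<alpha> \<beta>"
  shows "0 < coroot \<Phi> \<alpha> \<beta>" "0 < coroot \<Phi> \<beta> \<alpha>" "coroot \<Phi> \<alpha> \<beta> * coroot \<Phi> \<beta> \<alpha> \<le> 4"
proof -
  let ?A = "root_form \<Phi> \<alpha> \<alpha>" and ?B = "root_form \<Phi> \<beta> \<beta>"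
  have A: "4 \<le> ?A" and B: "4 \<le> ?B"
    using root_form_root_ge_4 a b by auto
  have eA: "coroot \<Phi> \<alpha> \<beta> * ?A = 2 * root_form \<Phi> \<alpha> \<beta>"
    using coroot_root_form[OF a, of \<beta>] root_form_commute[of \<alpha> \<beta>] by simp
  have eB: "coroot \<Phi> \<beta> \<alpha> * ?B = 2 * root_form \<Phi> \<alpha> \<beta>"
    using coroot_root_form[OF b, of \<alpha>] by simp
  show "0 < coroot \<Phi> \<alpha> \<beta>"
    using eA pos A zero_less_mult_iff[of "coroot \<Phi> \<alpha> \<beta>" ?A] by auto
  show "0 < coroot \<Phi> \<beta> \<alpha>"
    using eB pos B zero_less_mult_iff[of "coroot \<Phi> \<beta> \<alpha>" ?B] by auto
  have "(coroot \<Phi> \<alpha> \<beta> * coroot \<Phi> \<beta> \<alpha>) * (?A * ?B) = 4 * (root_form \<Phi> \<alpha> \<beta>)\<^sup>2"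
    using eA eB by (simp add: power2_eq_square algebra_simps)
  also have "\<dots> \<le> 4 * (?A * ?B)"
    using root_form_Cauchy_Schwarz[of \<alpha> \<beta>] by simp
  finally show "coroot \<Phi> \<alpha> \<beta> * coroot \<Phi> \<beta> \<alpha> \<le> 4"
    using A B by simp
qed

lemma root_eq_of_coroots_eq_2:
  assumes a: "\<alpha> \<in> \<Phi>" and b: "\<beta> \<in> \<Phi>" and ab: "coroot \<Phi> \<alpha> \<beta> = 2" and ba: "coroot \<Phi> \<beta> \<alpha> = 2"
  shows "\<alpha> = \<beta>"
proof -
  note la = linear_coroot[OF a] and lb = linear_coroot[OF b]
  \<comment> \<open>Reflecting in \<open>\<beta>\<close> and then in \<open>\<alpha>\<close> translates by \<open>2(\<alpha> - \<beta>)\<close> on this progression.\<close>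
  have "\<alpha> + real k *\<^sub>R (2 *\<^sub>R (\<alpha> - \<beta>)) \<in> \<Phi>" for k
  proof (induction k)
    case (Suc k)
    let ?x = "\<alpha> + real k *\<^sub>R (2 *\<^sub>R (\<alpha> - \<beta>))"
    have "coroot \<Phi> \<beta> ?x = 2"
      using ab ba coroot_self[OF b] by (simp add: linear_add[OF lb] linear_scale[OF lb] linear_diff[OF lb])
    then have y: "?x - 2 *\<^sub>R \<beta> \<in> \<Phi>"
      using reflection_in_roots[OF b Suc] by (simp add: reflection_def)
    have "coroot \<Phi> \<alpha> (?x - 2 *\<^sub>R \<beta>) = -2"
      using ab ba coroot_self[OF a] by (simp add: linear_add[OF la] linear_scale[OF la] linear_diff[OF la])
    then show ?case
      using reflection_in_roots[OF a y] by (simp add: reflection_def algebra_simps)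
  qed (use a in simp)
  then have "2 *\<^sub>R (\<alpha> - \<beta>) = 0"
    by (rule progression_in_roots_step_eq_0)
  then show ?thesis
    by simp
qed

lemma diff_roots_of_root_form_pos:
  assumes a: "\<alpha> \<in> \<Phi>" and b: "\<beta> \<in> \<Phi>" and pos: "0 < root_form \<Phi> \<alpha> \<beta>"
  shows "\<alpha> - \<beta> \<in> \<Phi> \<union> {0}"
proof -
  note Cartan = Cartan_integers_pos_of_root_form_pos[OF a b pos]
  have "coroot \<Phi> \<alpha> \<beta> = 1 \<or> coroot \<Phi> \<beta> \<alpha> = 1 \<or> (coroot \<Phi> \<alpha> \<beta> = 2 \<and> coroot \<Phi> \<beta> \<alpha> = 2)"
    using Ints_pos_mult_le_4 coroot_in_Ints a b Cartan by blast
  moreover have "\<beta> - \<alpha> \<in> \<Phi>" if "coroot \<Phi> \<alpha> \<beta> = 1"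
    using reflection_in_roots[OF a b] that by (simp add: reflection_def)
  moreover have "\<alpha> - \<beta> \<in> \<Phi>" if "coroot \<Phi> \<beta> \<alpha> = 1"
    using reflection_in_roots[OF b a] that by (simp add: reflection_def)
  ultimately show ?thesis
    using uminus_root[of "\<beta> - \<alpha>"] root_eq_of_coroots_eq_2[OF a b] by auto
qed

lemma root_form_pos_summand:
  assumes "sum_list xs \<in> \<Phi>"
  obtains x where "x \<in> set xs" "0 < root_form \<Phi> (sum_list xs) x"
proof -
  have "0 < sum_list (map (root_form \<Phi> (sum_list xs)) xs)"
    using root_form_root_ge_4[OF assms] linear_sum_list[OF linear_root_form] by simp
  then show ?thesis
    using that sum_list_nonpos[of "map (root_form \<Phi> (sum_list xs)) xs"] by (force simp: not_less)
qed

lemma closed_subsystem_sum_list: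
  assumes cs: "closed_subsystem \<Phi> P"
  shows "set xs \<subseteq> P \<union> {0} \<Longrightarrow> sum_list xs \<in> \<Phi> \<union> {0} \<Longrightarrow> sum_list xs \<in> P \<union> {0}"
proof (induction xs rule: length_induct)
  case (1 xs)
  show ?case
  proof (cases "sum_list xs = 0")
    case False
    define \<sigma> where "\<sigma> = sum_list xs"
    have \<sigma>: "\<sigma> \<in> \<Phi>"
      using "1.prems"(2) False unfolding \<sigma>_def by blast
    then obtain x where x: "x \<in> set xs" "0 < root_form \<Phi> \<sigma> x"
      unfolding \<sigma>_def by (rule root_form_pos_summand)
    have "x \<noteq> 0"
      using x(2) linear_0[OF linear_root_form] by auto
    then have xP: "x \<in> P"
      using x(1) "1.prems"(1) by auto
    have P: "P \<subseteq> \<Phi>" and closed: "\<And>a b. a \<in> P \<Longrightarrow> b \<in> P \<Longrightarrow> a + b \<in> \<Phi> \<Longrightarrow> a + b \<in> P"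
      using cs by (auto simp: closed_subsystem_def)
    have rest: "sum_list (remove1 x xs) = \<sigma> - x"
      using sum_list_map_remove1[OF x(1), of id] by (simp add: \<sigma>_def)
    have diff: "\<sigma> - x \<in> \<Phi> \<union> {0}"
      using diff_roots_of_root_form_pos[OF \<sigma> _ x(2)] xP P by blast
    have "\<sigma> - x \<in> P \<union> {0}"
    proof -
      have "length (remove1 x xs) < length xs"
        using length_pos_if_in_set[OF x(1)] by (simp add: length_remove1 x(1))
      moreover have "set (remove1 x xs) \<subseteq> P \<union> {0}"
        using "1.prems"(1) by (rule subset_trans[OF set_remove1_subset])
      ultimately show ?thesis
        using "1.IH"[rule_format, of "remove1 x xs"] diff by (simp only: rest)
    qed
    then have "\<sigma> \<in> P"
    proof
      assume "\<sigma> - x \<in> P"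
      then show ?thesis
        using closed[of "\<sigma> - x" x] xP \<sigma> by simp
    qed (use xP in simp)
    then show ?thesis
      by (simp add: \<sigma>_def)
  qed simp
qed

end

section \<open>Levels of sums of roots\<close>

text \<open>The levels that a sum of roots of levels \<open>ks\<close> can have: at most the top level, and
  strictly below it only if the top level occurs at least twice.\<close>
definition admissible_level :: "nat list \<Rightarrow> nat \<Rightarrow> bool" where
  "admissible_level ks j \<longleftrightarrow>
     j \<le> Max (set ks) \<and> (j = Max (set ks) \<or> 2 \<le> count_list ks (Max (set ks)))"

lemma admissible_level_singleton: "admissible_level [k] j \<longleftrightarrow> j = k"
  by (auto simp: admissible_level_def)

lemma admissible_level_pair:
  "admissible_level [j1, j2] j \<longleftrightarrow> (j \<le> j1 \<and> j1 = j2) \<or> (j2 \<le> j \<and> j = j1) \<or> (j1 \<le> j2 \<and> j2 = j)"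
  by (auto simp: admissible_level_def max_def)

lemma admissible_level_Max: "ks \<noteq> [] \<Longrightarrow> admissible_level ks (Max (set ks))"
  by (simp add: admissible_level_def)

lemma admissible_level_le:
  assumes "admissible_level ks j" "ks \<noteq> []" "\<forall>k\<in>set ks. k \<le> l"
  shows "j \<le> l"
proof -
  have "Max (set ks) \<le> l"
    using assms(2,3) by simp
  then show ?thesis
    using assms(1) by (simp add: admissible_level_def)
qed

lemma admissible_level_append_commute: "admissible_level (ks1 @ ks2) = admissible_level (ks2 @ ks1)"
  by (simp add: admissible_level_def Un_commute add.commute fun_eq_iff)

lemma admissible_level_append:
  assumes "ks1 \<noteq> []" "ks2 \<noteq> []" "admissible_level (ks1 @ ks2) j"
  shows "\<exists>J1 J2. admissible_level ks1 J1 \<and> admissible_level ks2 J2 \<and> admissible_level [J1, J2] j"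
proof -
  have ordered: "\<exists>J1 J2. admissible_level ks1 J1 \<and> admissible_level ks2 J2 \<and> admissible_level [J1, J2] j"
    if ne: "ks1 \<noteq> []" "ks2 \<noteq> []" and adm: "admissible_level (ks1 @ ks2) j"
      and le: "Max (set ks2) \<le> Max (set ks1)" for ks1 ks2
  proof -
    define M1 M2 where "M1 = Max (set ks1)" and "M2 = Max (set ks2)"
    have Max_append: "Max (set (ks1 @ ks2)) = M1"
      using ne le by (simp add: M1_def M2_def Max_Un max_absorb1)
    have adm1: "admissible_level ks1 M1" and adm2: "admissible_level ks2 M2"
      using admissible_level_Max ne by (simp_all add: M1_def M2_def)
    consider "j = M1" | "M2 = M1" "j \<le> M1" | "M2 < M1" "j \<le> M1" "2 \<le> count_list (ks1 @ ks2) M1"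
      using adm le Max_append by (fastforce simp: admissible_level_def M1_def M2_def)
    then show ?thesis
    proof cases
      case 1
      then show ?thesis
        using adm1 adm2 le by (auto simp: admissible_level_pair M1_def M2_def)
    next
      case 2
      then show ?thesis
        using adm1 adm2 by (auto simp: admissible_level_pair)
    next
      case 3
      \<comment> \<open>The top level \<open>M1\<close> occurs twice in \<open>ks1\<close> alone, so \<open>ks1\<close> can reach every level below it.\<close>
      have "M1 \<notin> set ks2"
        using 3 ne by (auto simp: M2_def)
      then have "admissible_level ks1 (max j M2)"
        using 3 by (auto simp: admissible_level_def M1_def)
      moreover have "admissible_level [max j M2, M2] j"
        by (auto simp: admissible_level_pair)
      ultimately show ?thesis
        using adm2 by blast
    qed
  qed
  show ?thesis
  proof (cases "Max (set ks2) \<le> Max (set ks1)")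
    case False
    then show ?thesis
      using ordered[of ks2 ks1] assms
      by (metis admissible_level_append_commute admissible_level_pair nat_le_linear)
  qed (use ordered assms in blast)
qed

definition root_level :: "(nat \<Rightarrow> 'v::real_vector set) \<Rightarrow> 'v \<Rightarrow> nat" where
  "root_level Phis \<alpha> = (LEAST j. \<alpha> \<in> Phis j \<union> {0})"

locale root_filtration =
  fixes \<Phi> :: "'v::real_vector set" and l :: nat and Phis :: "nat \<Rightarrow> 'v set"
  assumes root_system: "root_system \<Phi>"
    and closed_subsystem: "j \<le> l \<Longrightarrow> closed_subsystem \<Phi> (Phis j)"
    and mono: "j \<le> j' \<Longrightarrow> j' \<le> l \<Longrightarrow> Phis j \<subseteq> Phis j'"
    and top: "Phis l = \<Phi>"
begin

lemma root_level_le_iff: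
  assumes "\<alpha> \<in> \<Phi> \<union> {0}" "j \<le> l"
  shows "root_level Phis \<alpha> \<le> j \<longleftrightarrow> \<alpha> \<in> Phis j \<union> {0}"
proof
  have "\<alpha> \<in> Phis (root_level Phis \<alpha>) \<union> {0}"
    unfolding root_level_def by (rule LeastI[of _ l]) (use assms top in auto)
  then show "root_level Phis \<alpha> \<le> j \<Longrightarrow> \<alpha> \<in> Phis j \<union> {0}"
    using mono assms(2) by blast
qed (simp add: root_level_def Least_le)

lemma root_level_le: "\<alpha> \<in> \<Phi> \<union> {0} \<Longrightarrow> root_level Phis \<alpha> \<le> l"
  using root_level_le_iff top by blast

lemma admissible_root_level_le:
  assumes "admissible_level (map (root_level Phis) xs) j" "xs \<noteq> []" "set xs \<subseteq> \<Phi> \<union> {0}"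
  shows "j \<le> l"
  using admissible_level_le[OF assms(1)] assms(2,3) root_level_le by auto

lemma root_level_uminus_le:
  assumes "\<alpha> \<in> \<Phi> \<union> {0}"
  shows "root_level Phis (- \<alpha>) \<le> root_level Phis \<alpha>"
proof -
  let ?j = "root_level Phis \<alpha>"
  have j: "?j \<le> l"
    using assms by (rule root_level_le)
  have "\<alpha> \<in> Phis ?j \<union> {0}"
    using root_level_le_iff[OF assms j] by simp
  then have "- \<alpha> \<in> Phis ?j \<union> {0}"
    using closed_subsystem[OF j] by (auto simp: closed_subsystem_def)
  moreover have "- \<alpha> \<in> \<Phi> \<union> {0}"
    using assms uminus_root[OF root_system] by auto
  ultimately show ?thesis
    using root_level_le_iff[OF _ j] by blast
qed

lemma root_level_sum_list_le:
  assumes "set xs \<subseteq> \<Phi> \<union> {0}" "sum_list xs \<in> \<Phi> \<union> {0}" "j \<le> l"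
    and "\<forall>x\<in>set xs. root_level Phis x \<le> j"
  shows "root_level Phis (sum_list xs) \<le> j"
proof -
  have "set xs \<subseteq> Phis j \<union> {0}"
    using assms(1,3,4) root_level_le_iff by blast
  then have "sum_list xs \<in> Phis j \<union> {0}"
    using closed_subsystem_sum_list[OF root_system closed_subsystem[OF assms(3)]] assms(2) by blast
  then show ?thesis
    using root_level_le_iff[OF assms(2,3)] by blast
qed

lemma admissible_level_sum_list:
  assumes xs: "xs \<noteq> []" "set xs \<subseteq> \<Phi> \<union> {0}" and \<sigma>: "sum_list xs \<in> \<Phi> \<union> {0}"
  shows "admissible_level (map (root_level Phis) xs) (root_level Phis (sum_list xs))"
proof -
  let ?lev = "root_level Phis" and ?\<sigma> = "sum_list xs"
  define M where "M = Max (set (map ?lev xs))"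
  have M_in: "M \<in> ?lev ` set xs" and M_le: "M \<le> l"
    using xs root_level_le by (auto simp: M_def)
  have le_M: "\<forall>x\<in>set xs. ?lev x \<le> M"
    by (simp add: M_def)
  have "?lev ?\<sigma> \<le> M"
    using root_level_sum_list_le[OF xs(2) \<sigma> M_le le_M] .
  moreover have "2 \<le> count_list (map ?lev xs) M" if below: "?lev ?\<sigma> < M"
  proof (rule ccontr)
    assume "\<not> 2 \<le> count_list (map ?lev xs) M"
    obtain x0 where x0: "x0 \<in> set xs" "?lev x0 = M"
      using M_in by blast
    then obtain ys zs where split: "xs = ys @ x0 # zs"
      by (meson split_list)
    \<comment> \<open>Then \<open>x0\<close> is the only summand of top level, and \<open>x0 = \<sigma> - \<Sum>ws\<close> lies one level lower.\<close>
    define ws where "ws = ys @ zs"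
    have "count_list (map ?lev ws) M = 0"
      using \<open>\<not> 2 \<le> _\<close> x0(2) by (simp add: split ws_def)
    then have "M \<notin> ?lev ` set ws"
      by (auto simp: count_list_0_iff)
    then have neg: "- w \<in> \<Phi> \<union> {0}" "?lev (- w) \<le> M - 1" if "w \<in> set ws" for w
    proof -
      have "w \<in> set xs" "?lev w \<noteq> M"
        using that \<open>M \<notin> _\<close> by (auto simp: split ws_def)
      then have w: "w \<in> \<Phi> \<union> {0}" "?lev w \<le> M - 1"
        using le_M xs(2) by fastforce+
      show "- w \<in> \<Phi> \<union> {0}"
        using w(1) uminus_root[OF root_system] by auto
      show "?lev (- w) \<le> M - 1"
        using root_level_uminus_le[OF w(1)] w(2) by simp
    qed
    let ?ws = "?\<sigma> # map uminus ws"
    have ws: "set ?ws \<subseteq> \<Phi> \<union> {0}" "\<forall>w\<in>set ?ws. ?lev w \<le> M - 1"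
      using \<sigma> below neg by fastforce+
    have "sum_list (map uminus vs) = - sum_list vs" for vs :: "'v list"
      by (induction vs) simp_all
    then have "sum_list ?ws = x0"
      by (simp add: split ws_def)
    moreover have "x0 \<in> \<Phi> \<union> {0}"
      using xs(2) x0(1) by blast
    ultimately have "?lev x0 \<le> M - 1"
      using root_level_sum_list_le[OF ws(1) _ _ ws(2)] M_le by simp
    then show False
      using x0(2) below by simp
  qed
  ultimately show ?thesis
    unfolding admissible_level_def M_def[symmetric] by (meson le_neq_implies_less)
qed

end

section \<open>Bounds for \<open>f_tau\<close>\<close>

lemma nesum_Cons: "xs \<noteq> [] \<Longrightarrow> nesum (x # xs) = x + nesum xs"
  by (cases xs) simp_all

lemma nesum_mono:
  fixes f g :: "'a \<Rightarrow> 's::ordered_ab_semigroup_add"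
  assumes "xs \<noteq> []" "\<And>x. x \<in> set xs \<Longrightarrow> f x \<le> g x"
  shows "nesum (map f xs) \<le> nesum (map g xs)"
  using assms
proof (induction xs)
  case (Cons x xs)
  then show ?case
    by (cases "xs = []") (simp_all add: nesum_Cons add_mono)
qed simp

text \<open>By \<open>admissible_level_pair\<close>, \<open>admissible_level [j1, j2] j\<close> is the index condition of
  \<open>vee1\<close>; so this is the inequality \<open>h \<le> g \<or> g'\<close> with the second index held fixed.\<close>
definition vee_bounded :: "nat \<Rightarrow> (real \<Rightarrow> nat \<Rightarrow> 's::{ord,plus}) \<Rightarrow> (real \<Rightarrow> nat \<Rightarrow> 's)
    \<Rightarrow> (real \<Rightarrow> nat \<Rightarrow> 's) \<Rightarrow> bool" where
  "vee_bounded l h g g' \<longleftrightarrow> (\<forall>v v' j j1 j2. j \<le> l \<longrightarrow> j1 \<le> l \<longrightarrow> j2 \<le> l \<longrightarrow>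
     admissible_level [j1, j2] j \<longrightarrow> h (v + v') j \<le> g v j1 + g' v' j2)"

lemma vee_bounded_vee3: "vee_bounded l (\<lambda>v j. vee3 l \<tau> \<tau>' v i j) (\<lambda>v j. \<tau> v i j) (\<lambda>v j. \<tau>' v i j)"
  unfolding vee_bounded_def
proof (intro allI impI)
  fix v v' j j1 j2
  assume "j \<le> l" "j1 \<le> l" "j2 \<le> l" "admissible_level [j1, j2] j"
  have "vee3 l \<tau> \<tau>' (v + v') \<le> vee2 l (\<tau> v) (\<tau>' v')"
    unfolding vee3_def by (rule Inf_lower) blast
  then have "vee3 l \<tau> \<tau>' (v + v') i j \<le> vee2 l (\<tau> v) (\<tau>' v') i j"
    by (simp add: le_fun_def)
  also have "vee2 l (\<tau> v) (\<tau>' v') i \<le> vee1 l (\<tau> v i) (\<tau>' v' i)"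
    unfolding vee2_def by (rule Inf_lower) blast
  then have "vee2 l (\<tau> v) (\<tau>' v') i j \<le> vee1 l (\<tau> v i) (\<tau>' v' i) j"
    by (simp add: le_fun_def)
  also have "\<dots> \<le> \<tau> v i j1 + \<tau>' v' i j2"
    using \<open>j1 \<le> l\<close> \<open>j2 \<le> l\<close> \<open>admissible_level [j1, j2] j\<close>
    unfolding vee1_def admissible_level_pair by (intro Inf_lower) blast
  finally show "vee3 l \<tau> \<tau>' (v + v') i j \<le> \<tau> v i j1 + \<tau>' v' i j2" .
qed

lemma vee_bounded_concave3:
  assumes "concave3 l \<tau>"
  shows "vee_bounded l (\<lambda>v j. \<tau> v i j) (\<lambda>v j. \<tau> v i j) (\<lambda>v j. \<tau> v i j)"
  using vee_bounded_vee3[of l \<tau> \<tau> i] assms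
  unfolding vee_bounded_def concave3_def by (meson order_trans)

lemma vee_bounded_nesum:
  fixes g :: "real \<Rightarrow> nat \<Rightarrow> 's::ordered_ab_semigroup_add"
  assumes "length xs = 1 \<or> vee_bounded l g g g" "xs \<noteq> []" "\<forall>x\<in>set xs. k x \<le> l"
    and "admissible_level (map k xs) j"
  shows "g (sum_list (map v xs)) j \<le> nesum (map (\<lambda>x. g (v x) (k x)) xs)"
  using assms
proof (induction xs arbitrary: j)
  case (Cons x xs)
  show ?case
  proof (cases "xs = []")
    case True
    then show ?thesis
      using Cons.prems(4) by (simp add: admissible_level_singleton)
  next
    case False
    then have g: "vee_bounded l g g g"
      using Cons.prems(1) by simp
    obtain J1 J2 where J: "admissible_level [k x] J1" "admissible_level (map k xs) J2"
        "admissible_level [J1, J2] j"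
      using admissible_level_append[of "[k x]" "map k xs"] Cons.prems(4) False by fastforce
    have "J1 = k x"
      using J(1) by (simp add: admissible_level_singleton)
    moreover have "J2 \<le> l" "j \<le> l"
      using admissible_level_le J(2) Cons.prems(4) Cons.prems(3) False by auto
    ultimately have "g (sum_list (map v (x # xs))) j \<le> g (v x) (k x) + g (sum_list (map v xs)) J2"
      using g J(3) Cons.prems(3) by (simp add: vee_bounded_def)
    also have "\<dots> \<le> g (v x) (k x) + nesum (map (\<lambda>x. g (v x) (k x)) xs)"
      using Cons.IH[OF _ False _ J(2)] g Cons.prems(3) by (simp add: add_left_mono)
    finally show ?thesis
      using False by (simp add: nesum_Cons)
  qed
qed simp

context root_filtration
begin

lemma f_tau_eq: "f_tau l Phis lam \<tau> \<alpha> = (SUP i. \<tau> (lam \<alpha>) i (root_level Phis \<alpha>))"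
  by (simp add: f_tau_def root_level_def)

lemma le_nesum_f_tau:
  fixes \<tau> :: "real \<Rightarrow> 'i::linorder \<Rightarrow> nat \<Rightarrow> 's::{complete_lattice, ordered_ab_semigroup_add}"
  assumes lin: "linear lam" and conc: "length as = 1 \<or> concave3 l \<tau>"
    and ne: "as \<noteq> []" and roots: "set as \<subseteq> \<Phi> \<union> {0}"
    and adm: "admissible_level (map (root_level Phis) as) j"
  shows "\<tau> (lam (sum_list as)) i j \<le> nesum (map (f_tau l Phis lam \<tau>) as)"
proof -
  have "\<tau> (sum_list (map lam as)) i j \<le> nesum (map (\<lambda>x. \<tau> (lam x) i (root_level Phis x)) as)"
  proof (rule vee_bounded_nesum[OF _ ne _ adm])
    show "length as = 1 \<or> vee_bounded l (\<lambda>v j. \<tau> v i j) (\<lambda>v j. \<tau> v i j) (\<lambda>v j. \<tau> v i j)"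
      using vee_bounded_concave3 conc by blast
    show "\<forall>x\<in>set as. root_level Phis x \<le> l"
      using roots root_level_le by blast
  qed
  also have "\<dots> \<le> nesum (map (f_tau l Phis lam \<tau>) as)"
    using ne by (rule nesum_mono) (auto simp: f_tau_eq intro: SUP_upper)
  finally show ?thesis
    by (simp add: linear_sum_list[OF lin])
qed

lemma f_tau_vee3_le_nesum:
  fixes \<tau> \<tau>' :: "real \<Rightarrow> 'i::linorder \<Rightarrow> nat \<Rightarrow> 's::{complete_lattice, ordered_ab_semigroup_add}"
  assumes lin: "linear lam"
    and conc: "length as = 1 \<or> concave3 l \<tau>" "length bs = 1 \<or> concave3 l \<tau>'"
    and ne: "as \<noteq> []" "bs \<noteq> []" and roots: "set as \<subseteq> \<Phi> \<union> {0}" "set bs \<subseteq> \<Phi> \<union> {0}"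
    and sum: "sum_list as + sum_list bs \<in> \<Phi> \<union> {0}"
  shows "f_tau l Phis lam (vee3 l \<tau> \<tau>') (sum_list as + sum_list bs)
    \<le> nesum (map (f_tau l Phis lam \<tau>) as) + nesum (map (f_tau l Phis lam \<tau>') bs)"
  unfolding f_tau_eq[of _ _ "sum_list as + sum_list bs"]
proof (rule SUP_least)
  fix i
  let ?lev = "root_level Phis" and ?\<alpha> = "sum_list as + sum_list bs"
  have "admissible_level (map ?lev as @ map ?lev bs) (?lev ?\<alpha>)"
    using admissible_level_sum_list[of "as @ bs"] ne roots sum by simp
  then obtain J1 J2 where J: "admissible_level (map ?lev as) J1" "admissible_level (map ?lev bs) J2"
      "admissible_level [J1, J2] (?lev ?\<alpha>)"
    using admissible_level_append ne by blast
  have "J1 \<le> l" "J2 \<le> l"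
    using admissible_root_level_le J(1,2) ne roots by blast+
  then have "vee3 l \<tau> \<tau>' (lam ?\<alpha>) i (?lev ?\<alpha>) \<le> \<tau> (lam (sum_list as)) i J1 + \<tau>' (lam (sum_list bs)) i J2"
    using vee_bounded_vee3[of l \<tau> \<tau>' i] J(3) root_level_le[OF sum] lin
    by (simp add: vee_bounded_def linear_add)
  also have "\<dots> \<le> nesum (map (f_tau l Phis lam \<tau>) as) + nesum (map (f_tau l Phis lam \<tau>') bs)"
    using le_nesum_f_tau[OF lin conc(1) ne(1) roots(1) J(1)] le_nesum_f_tau[OF lin conc(2) ne(2) roots(2) J(2)]
    by (rule add_mono)
  finally show "vee3 l \<tau> \<tau>' (lam ?\<alpha>) i (?lev ?\<alpha>)
      \<le> nesum (map (f_tau l Phis lam \<tau>) as) + nesum (map (f_tau l Phis lam \<tau>') bs)" .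
qed

lemma concave_fun_f_tau:
  fixes \<tau> :: "real \<Rightarrow> 'i::linorder \<Rightarrow> nat \<Rightarrow> 's::{complete_lattice, ordered_ab_semigroup_add}"
  assumes lin: "linear lam" and conc: "concave3 l \<tau>"
  shows "concave_fun (\<Phi> \<union> {0}) (f_tau l Phis lam \<tau>)"
  unfolding concave_fun_def f_tau_eq[of _ _ "sum_list _"]
  using le_nesum_f_tau[OF lin _ _ _ admissible_level_sum_list] conc by (blast intro: SUP_least)

lemma f_tau_vee3_le_bowtie:
  fixes \<tau> \<tau>' :: "real \<Rightarrow> 'i::linorder \<Rightarrow> nat \<Rightarrow> 's::{complete_lattice, ordered_ab_semigroup_add}"
  assumes "linear lam" "\<alpha> \<in> \<Phi> \<union> {0}"
  shows "f_tau l Phis lam (vee3 l \<tau> \<tau>') \<alpha> \<le> bowtie (\<Phi> \<union> {0}) (f_tau l Phis lam \<tau>) (f_tau l Phis lam \<tau>') \<alpha>"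
  unfolding bowtie_def
  using f_tau_vee3_le_nesum[of lam "[_]" \<tau> "[_]" \<tau>'] assms by (auto intro!: Inf_greatest)

lemma f_tau_vee3_le_rtimes:
  fixes \<tau> \<tau>' :: "real \<Rightarrow> 'i::linorder \<Rightarrow> nat \<Rightarrow> 's::{complete_lattice, ordered_ab_semigroup_add}"
  assumes "linear lam" "concave3 l \<tau>" "\<alpha> \<in> \<Phi> \<union> {0}"
  shows "f_tau l Phis lam (vee3 l \<tau> \<tau>') \<alpha> \<le> rtimes (\<Phi> \<union> {0}) (f_tau l Phis lam \<tau>) (f_tau l Phis lam \<tau>') \<alpha>"
  unfolding rtimes_def
  using f_tau_vee3_le_nesum[of lam _ \<tau> "[_]" \<tau>'] assms by (auto intro!: Inf_greatest)

lemma f_tau_vee3_le_curlyvee: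
  fixes \<tau> \<tau>' :: "real \<Rightarrow> 'i::linorder \<Rightarrow> nat \<Rightarrow> 's::{complete_lattice, ordered_ab_semigroup_add}"
  assumes "linear lam" "concave3 l \<tau>" "concave3 l \<tau>'" "\<alpha> \<in> \<Phi> \<union> {0}"
  shows "f_tau l Phis lam (vee3 l \<tau> \<tau>') \<alpha> \<le> curlyvee (\<Phi> \<union> {0}) (f_tau l Phis lam \<tau>) (f_tau l Phis lam \<tau>') \<alpha>"
  unfolding curlyvee_def
  using f_tau_vee3_le_nesum[of lam _ \<tau> _ \<tau>'] assms by (auto intro!: Inf_greatest)

end

theorem lemmaB7:
  fixes l :: nat
    and \<Phi> :: "'v::real_vector set"
    and Phis :: "nat \<Rightarrow> 'v set"
    and lam :: "'v \<Rightarrow> real"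
    and \<tau> \<tau>' :: "real \<Rightarrow> 'i::linorder \<Rightarrow> nat \<Rightarrow> 's::{complete_lattice, ordered_ab_semigroup_add}"
  assumes rs: "root_system \<Phi>"
    and sub: "\<And>j. j \<le> l \<Longrightarrow> closed_subsystem \<Phi> (Phis j)"
    and chain: "\<And>j j'. j \<le> j' \<Longrightarrow> j' \<le> l \<Longrightarrow> Phis j \<subseteq> Phis j'"
    and top: "Phis l = \<Phi>"
    and lin: "linear lam"
  defines "\<Psi> \<equiv> \<Phi> \<union> {0}"
  shows "(concave3 l \<tau> \<longrightarrow> concave_fun \<Psi> (f_tau l Phis lam \<tau>))
    \<and> (\<forall>\<alpha>\<in>\<Psi>. f_tau l Phis lam (vee3 l \<tau> \<tau>') \<alpha>
                  \<le> bowtie \<Psi> (f_tau l Phis lam \<tau>) (f_tau l Phis lam \<tau>') \<alpha>)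
    \<and> (concave3 l \<tau> \<longrightarrow> (\<forall>\<alpha>\<in>\<Psi>. f_tau l Phis lam (vee3 l \<tau> \<tau>') \<alpha>
                  \<le> rtimes \<Psi> (f_tau l Phis lam \<tau>) (f_tau l Phis lam \<tau>') \<alpha>))
    \<and> (concave3 l \<tau> \<and> concave3 l \<tau>' \<longrightarrow> (\<forall>\<alpha>\<in>\<Psi>. f_tau l Phis lam (vee3 l \<tau> \<tau>') \<alpha>
                  \<le> curlyvee \<Psi> (f_tau l Phis lam \<tau>) (f_tau l Phis lam \<tau>') \<alpha>))"
proof -
  interpret root_filtration \<Phi> l Phis
    using rs sub chain top by unfold_locales
  show ?thesis
    unfolding \<Psi>_def
    by (intro conjI impI ballI concave_fun_f_tau f_tau_vee3_le_bowtie f_tau_vee3_le_rtimes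
        f_tau_vee3_le_curlyvee lin; simp)
qed

end
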